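(* Let ${\bf Y}$ be a set equipped with functions $d^\pi_Y$ ($Y\in{\bf Y}$) and a constant $\xi>0$ satisfying axioms (1)–(4) below, and let $\mathcal H(X,Z)$ be as defined below. If $(X',Z')\in\mathcal H(X,Z)$ and $Y\in{\bf Y}$ is distinct from $X,Z,X',Z'$, then $$d^\pi_Y(X,Z)-d^\pi_Y(X',Z')<2\xi.$$
   Context: Let ${\bf Y}$ be a set and for each $Y\in{\bf Y}$ let $d^\pi_Y:({\bf Y}\setminus\{Y\})\times({\bf Y}\setminus\{Y\})\to[0,\infty)$ be a function, and let $\xi>0$ be a constant, such that (1) $d^\pi_Y(X,Z)=d^\pi_Y(Z,X)$; (2) $d^\pi_Y(X,Z)+d^\pi_Y(Z,W)\ge d^\pi_Y(X,W)$; (3) for pairwise distinct $X,Y,Z$, $\min\{d^\pi_Y(X,Z),d^\pi_Z(X,Y)\}<\xi$; (4) for all $X,Z\in{\bf Y}$ the set $\{Y: d^\pi_Y(X,Z)\ge\xi\}$ is finite. For $X,Z\in{\bf Y}$, $\mathcal H(X,Z)$ is the set of pairs $(X',Z')\in{\bf Y}\times{\bf Y}$ such that one of the following holds: $d^\pi_X(X',Z')>2\xi$ and $d^\pi_Z(X',Z')>2\xi$; or $X'=X$ and $d^\pi_Z(X,Z')>2\xi$; or $Z'=Z$ and $d^\pi_X(X',Z)>2\xi$; or $(X',Z')=(X,Z)$. *)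

theory Defs
  imports Complex_Main
begin

text \<open>Projection axioms (1)-(4). The function d Y X Z stands for d^pi_Y(X,Z); it is
only meaningful for X, Z in Ys - {Y}, and all axioms are relativised accordingly.\<close>

definition proj_axioms :: "'a set \<Rightarrow> ('a \<Rightarrow> 'a \<Rightarrow> 'a \<Rightarrow> real) \<Rightarrow> real \<Rightarrow> bool" where
  "proj_axioms Ys d \<xi> \<longleftrightarrow> \<xi> > 0 \<and>
     (\<forall>Y\<in>Ys. \<forall>X\<in>Ys - {Y}. \<forall>Z\<in>Ys - {Y}. 0 \<le> d Y X Z) \<and>
     (\<forall>Y\<in>Ys. \<forall>X\<in>Ys - {Y}. \<forall>Z\<in>Ys - {Y}. d Y X Z = d Y Z X) \<and>
     (\<forall>Y\<in>Ys. \<forall>X\<in>Ys - {Y}. \<forall>Z\<in>Ys - {Y}. \<forall>W\<in>Ys - {Y}. d Y X Z + d Y Z W \<ge> d Y X W) \<and>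
     (\<forall>X\<in>Ys. \<forall>Y\<in>Ys. \<forall>Z\<in>Ys. X \<noteq> Y \<and> Y \<noteq> Z \<and> X \<noteq> Z \<longrightarrow> min (d Y X Z) (d Z X Y) < \<xi>) \<and>
     (\<forall>X\<in>Ys. \<forall>Z\<in>Ys. finite {Y \<in> Ys. Y \<noteq> X \<and> Y \<noteq> Z \<and> d Y X Z \<ge> \<xi>})"

text \<open>The set H(X,Z); each clause carries the guards needed for the d-terms to be defined.\<close>

definition Hset :: "'a set \<Rightarrow> ('a \<Rightarrow> 'a \<Rightarrow> 'a \<Rightarrow> real) \<Rightarrow> real \<Rightarrow> 'a \<Rightarrow> 'a \<Rightarrow> ('a \<times> 'a) set" where
  "Hset Ys d \<xi> X Z = {(X', Z'). X' \<in> Ys \<and> Z' \<in> Ys \<and>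
     ((X' \<noteq> X \<and> Z' \<noteq> X \<and> X' \<noteq> Z \<and> Z' \<noteq> Z \<and> d X X' Z' > 2 * \<xi> \<and> d Z X' Z' > 2 * \<xi>) \<or>
      (X' = X \<and> X \<noteq> Z \<and> Z' \<noteq> Z \<and> d Z X Z' > 2 * \<xi>) \<or>
      (Z' = Z \<and> X' \<noteq> X \<and> Z \<noteq> X \<and> d X X' Z > 2 * \<xi>) \<or>
      (X' = X \<and> Z' = Z))}"

end

theory Submission
  imports Defs
begin

text \<open>If Y projects X and Z both within \<open>\<xi>\<close> of the pair (X',Z'), the triangle inequality
  in \<open>d Y\<close> gives the bound. That such close ends exist is a consequence of axiom (3): whenever
  \<open>d A P Q > 2\<xi>\<close>, the projection of A to Y lies within \<open>\<xi>\<close> of P or of Q, for otherwise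
  \<open>d A P Y\<close> and \<open>d A Q Y\<close> would both be below \<open>\<xi>\<close> and the triangle inequality in \<open>d A\<close> would
  force \<open>d A P Q < 2\<xi>\<close>.\<close>

lemma proj_axioms_pos: "proj_axioms Ys d \<xi> \<Longrightarrow> \<xi> > 0"
  unfolding proj_axioms_def by blast

lemma proj_axioms_nonneg:
  "\<lbrakk>proj_axioms Ys d \<xi>; Y \<in> Ys; X \<in> Ys; Z \<in> Ys; X \<noteq> Y; Z \<noteq> Y\<rbrakk> \<Longrightarrow> 0 \<le> d Y X Z"
  unfolding proj_axioms_def by (elim conjE) blast

lemma proj_axioms_commute:
  "\<lbrakk>proj_axioms Ys d \<xi>; Y \<in> Ys; X \<in> Ys; Z \<in> Ys; X \<noteq> Y; Z \<noteq> Y\<rbrakk> \<Longrightarrow> d Y X Z = d Y Z X"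
  unfolding proj_axioms_def by (elim conjE) blast

lemma proj_axioms_triangle:
  "\<lbrakk>proj_axioms Ys d \<xi>; Y \<in> Ys; X \<in> Ys; Z \<in> Ys; W \<in> Ys; X \<noteq> Y; Z \<noteq> Y; W \<noteq> Y\<rbrakk>
    \<Longrightarrow> d Y X W \<le> d Y X Z + d Y Z W"
  unfolding proj_axioms_def by (elim conjE) blast

lemma proj_axioms_min_lt:
  "\<lbrakk>proj_axioms Ys d \<xi>; X \<in> Ys; Y \<in> Ys; Z \<in> Ys; X \<noteq> Y; Y \<noteq> Z; X \<noteq> Z\<rbrakk>
    \<Longrightarrow> d Y X Z < \<xi> \<or> d Z X Y < \<xi>"
  unfolding proj_axioms_def min_less_iff_disj by (elim conjE) blast

lemma proj_close_to_end_of_far_pair: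
  assumes ax: "proj_axioms Ys d \<xi>"
    and in_Ys: "A \<in> Ys" "Y \<in> Ys" "P \<in> Ys" "Q \<in> Ys"
    and "A \<noteq> Y" "P \<noteq> A" "Q \<noteq> A" "P \<noteq> Y" "Q \<noteq> Y"
    and far: "d A P Q > 2 * \<xi>"
  shows "d Y A P < \<xi> \<or> d Y A Q < \<xi>"
proof (rule ccontr)
  assume "\<not> ?thesis"
  then have "d Y P A \<ge> \<xi>" "d Y Q A \<ge> \<xi>"
    using proj_axioms_commute[OF ax, of Y A] assms by auto
  then have "d A P Y < \<xi>" "d A Q Y < \<xi>"
    using proj_axioms_min_lt[OF ax, of P A Y] proj_axioms_min_lt[OF ax, of Q A Y] assms by auto
  moreover have "d A P Q \<le> d A P Y + d A Y Q"
    using proj_axioms_triangle[OF ax] assms by blast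
  moreover have "d A Y Q = d A Q Y"
    using proj_axioms_commute[OF ax] assms by blast
  ultimately show False using far by linarith
qed

lemma proj_diff_lt_of_close_ends:
  assumes ax: "proj_axioms Ys d \<xi>"
    and in_Ys: "Y \<in> Ys" "X \<in> Ys" "Z \<in> Ys" "X' \<in> Ys" "Z' \<in> Ys"
    and "X \<noteq> Y" "Z \<noteq> Y" "X' \<noteq> Y" "Z' \<noteq> Y"
    and close_X: "\<exists>P\<in>{X', Z'}. d Y X P < \<xi>"
    and close_Z: "\<exists>Q\<in>{X', Z'}. d Y Z Q < \<xi>"
  shows "d Y X Z - d Y X' Z' < 2 * \<xi>"
proof -
  obtain P where P: "P \<in> {X', Z'}" and close: "d Y X P < \<xi>" using close_X by blast
  obtain Q where Q: "Q \<in> {X', Z'}" and close': "d Y Z Q < \<xi>" using close_Z by blast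
  have "P \<in> Ys" "Q \<in> Ys" "P \<noteq> Y" "Q \<noteq> Y" using P Q assms by auto
  note pts = assms this
  have close_Q: "d Y Q Z < \<xi>" using close' proj_axioms_commute[OF ax] pts by metis
  have "0 \<le> d Y X' Z'" using proj_axioms_nonneg[OF ax] pts by blast
  show ?thesis
  proof (cases "P = Q")
    case True
    have "d Y X Z \<le> d Y X P + d Y P Z" using proj_axioms_triangle[OF ax] pts by blast
    with close_Q close \<open>0 \<le> d Y X' Z'\<close> show ?thesis unfolding True by linarith
  next
    case False
    with P Q have "d Y P Q = d Y X' Z'" using proj_axioms_commute[OF ax] pts by auto
    moreover have "d Y X Z \<le> d Y X P + d Y P Q + d Y Q Z"
      using proj_axioms_triangle[OF ax, of Y X P Z] proj_axioms_triangle[OF ax, of Y P Q Z] pts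
      by force
    ultimately show ?thesis using close_Q close by linarith
  qed
qed

lemma proj_diff_lt_of_common_end:
  assumes ax: "proj_axioms Ys d \<xi>"
    and in_Ys: "Y \<in> Ys" "X \<in> Ys" "Z \<in> Ys" "W \<in> Ys"
    and "X \<noteq> Y" "Z \<noteq> Y" "W \<noteq> Y"
    and close: "d Y Z X < \<xi> \<or> d Y Z W < \<xi>"
  shows "d Y X Z - d Y X W < 2 * \<xi>"
proof -
  have "\<xi> > 0" "0 \<le> d Y X W" using proj_axioms_pos[OF ax] proj_axioms_nonneg[OF ax] assms by blast+
  moreover have "d Y Z X = d Y X Z" "d Y Z W = d Y W Z"
    using proj_axioms_commute[OF ax] assms by blast+
  moreover have "d Y X Z \<le> d Y X W + d Y W Z"
    using proj_axioms_triangle[OF ax] assms by blast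
  ultimately show ?thesis using close by linarith
qed

theorem proposition2p2:
  fixes Ys :: "'a set" and d :: "'a \<Rightarrow> 'a \<Rightarrow> 'a \<Rightarrow> real" and \<xi> :: real
  assumes "proj_axioms Ys d \<xi>"
    and "X \<in> Ys" and "Z \<in> Ys" and "Y \<in> Ys"
    and "(X', Z') \<in> Hset Ys d \<xi> X Z"
    and "Y \<noteq> X" and "Y \<noteq> Z" and "Y \<noteq> X'" and "Y \<noteq> Z'"
  shows "d Y X Z - d Y X' Z' < 2 * \<xi>"
proof -
  note ax = assms(1)
  have "X' \<in> Ys" "Z' \<in> Ys" using assms(5) unfolding Hset_def by auto
  note pts = assms(2-4,6-9) this
  note close_end = proj_close_to_end_of_far_pair[OF ax]
  from assms(5) consider
      (generic) "X' \<noteq> X" "Z' \<noteq> X" "X' \<noteq> Z" "Z' \<noteq> Z" "d X X' Z' > 2 * \<xi>" "d Z X' Z' > 2 * \<xi>"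
    | (left_fixed) "X' = X" "X \<noteq> Z" "Z' \<noteq> Z" "d Z X Z' > 2 * \<xi>"
    | (right_fixed) "Z' = Z" "X' \<noteq> X" "Z \<noteq> X" "d X X' Z > 2 * \<xi>"
    | (equal) "X' = X" "Z' = Z"
    unfolding Hset_def by auto
  then show ?thesis
  proof cases
    case generic
    have "d Y X X' < \<xi> \<or> d Y X Z' < \<xi>" by (rule close_end) (use generic pts in auto)
    moreover have "d Y Z X' < \<xi> \<or> d Y Z Z' < \<xi>" by (rule close_end) (use generic pts in auto)
    ultimately show ?thesis by (intro proj_diff_lt_of_close_ends[OF ax]) (use pts in auto)
  next
    case left_fixed
    have "d Y Z X < \<xi> \<or> d Y Z Z' < \<xi>" by (rule close_end) (use left_fixed pts in auto)
    with left_fixed show ?thesis using proj_diff_lt_of_common_end[OF ax] pts by blast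
  next
    case right_fixed
    have "d Y X X' < \<xi> \<or> d Y X Z < \<xi>" by (rule close_end) (use right_fixed pts in auto)
    then have "d Y Z X - d Y Z X' < 2 * \<xi>" using proj_diff_lt_of_common_end[OF ax] pts by blast
    with right_fixed show ?thesis using proj_axioms_commute[OF ax] pts by metis
  next
    case equal
    then show ?thesis using proj_axioms_pos[OF ax] by simp
  qed
qed

end
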